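(* Let $S\subset\Pi$. The assignments $s_{\alpha_i}(\eta,o)=(s_{\alpha_i}\eta,\ \eta(\alpha_i)^{r_i}o)$ for $\alpha_i\in S$ extend to a well-defined action of the group $W_S$ on the set $\mathbb D(S)\times\{\pm1\}$.
   Context: $\mathfrak g$ is a real split semisimple Lie algebra with simple roots $\Pi=\{\alpha_1,\dots,\alpha_l\}$, coroots $h_{\alpha_j}$, Cartan matrix $C_{i,j}=\alpha_i(h_{\alpha_j})$, Weyl group $W$. For $S\subset\Pi$, $W_S\subset W$ is the subgroup generated by the simple reflections $s_\alpha$, $\alpha\in S$; $\mathbb D(S)$ is the set of functions $\eta:S\to\{\pm1\}$ (colored Dynkin diagrams with colored set $S$). For $\alpha_i\in S$, $s_{\alpha_i}\eta\in\mathbb D(S)$ is defined by $(s_{\alpha_i}\eta)(\alpha_j)=\eta(\alpha_j)\eta(\alpha_i)^{-C_{j,i}}$ for $\alpha_j\in S$, and $r_i$ is the number of $\alpha_j\in\Pi\setminus S$ with $C_{j,i}$ odd. *)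

theory Defs
  imports Complex_Main
begin

text \<open>Simple roots are indexed by a finite type 'i; C i j = alpha_i(h_alpha_j).\<close>

definition finite_type_cartan :: "('i::finite \<Rightarrow> 'i \<Rightarrow> int) \<Rightarrow> bool" where
  "finite_type_cartan C \<longleftrightarrow>
     (\<forall>i. C i i = 2) \<and>
     (\<forall>i j. i \<noteq> j \<longrightarrow> C i j \<le> 0) \<and>
     (\<forall>i j. C i j = 0 \<longleftrightarrow> C j i = 0) \<and>
     (\<exists>d :: 'i \<Rightarrow> real. (\<forall>i. d i > 0) \<and>
        (\<forall>i j. d i * of_int (C i j) = d j * of_int (C j i)) \<and>
        (\<forall>x :: 'i \<Rightarrow> real. x \<noteq> (\<lambda>_. 0) \<longrightarrow>
            (\<Sum>i\<in>UNIV. \<Sum>j\<in>UNIV. x i * d i * of_int (C i j) * x j) > 0))"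

text \<open>Simple reflection s_alpha_i acting on the dual of the Cartan subalgebra, in coordinates
  w.r.t. the basis of simple roots: s_i(v) = v - v(h_i) alpha_i, where
  v(h_i) = sum_k v_k C k i.\<close>

definition simple_refl :: "('i::finite \<Rightarrow> 'i \<Rightarrow> int) \<Rightarrow> 'i \<Rightarrow> ('i \<Rightarrow> real) \<Rightarrow> ('i \<Rightarrow> real)" where
  "simple_refl C i v = (\<lambda>j. if j = i then v j - (\<Sum>k\<in>UNIV. v k * of_int (C k i)) else v j)"

inductive_set weyl_sub :: "('i::finite \<Rightarrow> 'i \<Rightarrow> int) \<Rightarrow> 'i set \<Rightarrow> (('i \<Rightarrow> real) \<Rightarrow> ('i \<Rightarrow> real)) set"
  for C S where
  weyl_id: "id \<in> weyl_sub C S"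
| weyl_step: "w \<in> weyl_sub C S \<Longrightarrow> i \<in> S \<Longrightarrow> simple_refl C i \<circ> w \<in> weyl_sub C S"

text \<open>Colored Dynkin diagrams with colored set S: functions S -> {1,-1},
  extended by the value 1 outside S.\<close>

definition colored :: "'i set \<Rightarrow> ('i \<Rightarrow> real) set" where
  "colored S = {\<eta>. (\<forall>j\<in>S. \<eta> j = 1 \<or> \<eta> j = -1) \<and> (\<forall>j. j \<notin> S \<longrightarrow> \<eta> j = 1)}"

definition refl_col :: "('i \<Rightarrow> 'i \<Rightarrow> int) \<Rightarrow> 'i set \<Rightarrow> 'i \<Rightarrow> ('i \<Rightarrow> real) \<Rightarrow> ('i \<Rightarrow> real)" where
  "refl_col C S i \<eta> = (\<lambda>j. if j \<in> S then \<eta> j * (\<eta> i) powi (- C j i) else 1)"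

definition r_num :: "('i::finite \<Rightarrow> 'i \<Rightarrow> int) \<Rightarrow> 'i set \<Rightarrow> 'i \<Rightarrow> nat" where
  "r_num C S i = card {j. j \<notin> S \<and> odd (C j i)}"

definition gen_act :: "('i::finite \<Rightarrow> 'i \<Rightarrow> int) \<Rightarrow> 'i set \<Rightarrow> 'i \<Rightarrow> ('i \<Rightarrow> real) \<times> real \<Rightarrow> ('i \<Rightarrow> real) \<times> real" where
  "gen_act C S i = (\<lambda>(\<eta>, \<epsilon>). (refl_col C S i \<eta>, (\<eta> i) ^ r_num C S i * \<epsilon>))"

end

theory Submission
  imports Defs
begin

text \<open>Read a sign vector \<open>\<eta>\<close> as the character \<open>\<alpha>\<^sub>k \<mapsto> \<eta> k\<close> of the root lattice. Each
  \<open>w \<in> W\<^sub>S\<close> acts on the root lattice by an integer matrix whose rows outside \<open>S\<close> are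
  identity rows, since \<open>s\<^sub>i\<close> only changes the \<open>\<alpha>\<^sub>i\<close>-coordinate, and precomposition with
  \<open>w\<^sup>-\<^sup>1\<close> is an action of \<open>W\<^sub>S\<close> on all characters. A pair \<open>(\<eta>, \<epsilon>)\<close> remembers a character
  only through its values on \<open>S\<close> and the product of its values on the simple roots outside \<open>S\<close>.
  As \<open>w\<^sup>-\<^sup>1 \<alpha>\<^sub>j \<in> \<alpha>\<^sub>j + span S\<close> for \<open>j \<notin> S\<close>, this data is transported consistently, and for
  \<open>s\<^sub>i\<close> the product picks up \<open>\<eta>(\<alpha>\<^sub>i)\<close> to the power \<open>-\<Sum>\<^sub>j\<^sub>\<notin>\<^sub>S C\<^sub>j\<^sub>,\<^sub>i \<equiv> r\<^sub>i (mod 2)\<close>.\<close>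

lemma power_int_sum:
  fixes x :: "'a::field"
  assumes "x \<noteq> 0" "finite A"
  shows "x powi (\<Sum>a\<in>A. f a) = (\<Prod>a\<in>A. x powi f a)"
  using assms(2) by (induction A rule: finite_induct) (auto simp: power_int_add assms(1))

lemma prod_power_int:
  fixes f :: "'b \<Rightarrow> 'a::field"
  shows "(\<Prod>a\<in>A. f a) powi n = (\<Prod>a\<in>A. f a powi n)"
  by (induction A rule: infinite_finite_induct) (auto simp: power_int_mult_distrib)

lemma sign_power_int:
  fixes y :: "'a::division_ring"
  assumes "y = 1 \<or> y = -1"
  shows "y powi n = (if even n then 1 else y)"
  using assms by (auto simp: power_int_minus_left)

definition unit_vec :: "'i \<Rightarrow> 'i \<Rightarrow> real" where
  "unit_vec k = (\<lambda>j. if j = k then 1 else 0)"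

definition mat_one :: "'i \<Rightarrow> 'i \<Rightarrow> int" where
  "mat_one = (\<lambda>j k. if j = k then 1 else 0)"

definition mat_mult :: "('i::finite \<Rightarrow> 'i \<Rightarrow> int) \<Rightarrow> ('i \<Rightarrow> 'i \<Rightarrow> int) \<Rightarrow> 'i \<Rightarrow> 'i \<Rightarrow> int" where
  "mat_mult M N = (\<lambda>j l. \<Sum>k\<in>UNIV. M j k * N k l)"

definition mat_map :: "('i::finite \<Rightarrow> 'i \<Rightarrow> int) \<Rightarrow> ('i \<Rightarrow> real) \<Rightarrow> 'i \<Rightarrow> real" where
  "mat_map M v = (\<lambda>j. \<Sum>k\<in>UNIV. of_int (M j k) * v k)"

text \<open>The floor only moves the entries to \<open>int\<close>; it is exact on maps of the form \<open>mat_map M\<close>.\<close>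

definition matrix_of :: "(('i \<Rightarrow> real) \<Rightarrow> 'i \<Rightarrow> real) \<Rightarrow> 'i \<Rightarrow> 'i \<Rightarrow> int" where
  "matrix_of u = (\<lambda>j k. \<lfloor>u (unit_vec k) j\<rfloor>)"

definition id_rows_outside :: "'i set \<Rightarrow> ('i \<Rightarrow> 'i \<Rightarrow> int) \<Rightarrow> bool" where
  "id_rows_outside S M \<longleftrightarrow> (\<forall>j. j \<notin> S \<longrightarrow> M j = mat_one j)"

definition refl_mat :: "('i \<Rightarrow> 'i \<Rightarrow> int) \<Rightarrow> 'i \<Rightarrow> 'i \<Rightarrow> 'i \<Rightarrow> int" where
  "refl_mat C i = (\<lambda>j k. mat_one j k - (if j = i then C k i else 0))"

lemma mat_map_unit_vec: "mat_map M (unit_vec k) j = of_int (M j k)"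
  by (simp add: mat_map_def unit_vec_def if_distrib[of "\<lambda>x. _ * x"] cong: if_cong)

lemma matrix_of_mat_map: "matrix_of (mat_map M) = M"
  by (simp add: matrix_of_def mat_map_unit_vec)

lemma mat_map_mat_one: "mat_map mat_one = id"
  by (simp add: mat_map_def mat_one_def fun_eq_iff if_distrib[of "\<lambda>x. of_int x * _"] cong: if_cong)

lemma mat_map_mat_mult: "mat_map (mat_mult M N) = mat_map M \<circ> mat_map N"
proof (rule ext)+
  fix v j
  have "(mat_map M \<circ> mat_map N) v j = (\<Sum>k\<in>UNIV. \<Sum>l\<in>UNIV. of_int (M j k) * of_int (N k l) * v l)"
    by (simp add: mat_map_def sum_distrib_left mult.assoc)
  also have "\<dots> = (\<Sum>l\<in>UNIV. \<Sum>k\<in>UNIV. of_int (M j k) * of_int (N k l) * v l)"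
    by (rule sum.swap)
  also have "\<dots> = mat_map (mat_mult M N) v j"
    by (simp add: mat_map_def mat_mult_def sum_distrib_right)
  finally show "mat_map (mat_mult M N) v j = (mat_map M \<circ> mat_map N) v j" ..
qed

lemma simple_refl_eq_mat_map: "simple_refl C i = mat_map (refl_mat C i)"
proof (rule ext)+
  fix v j
  have "mat_map (refl_mat C i) v j
      = (\<Sum>k\<in>UNIV. (if j = k then v k else 0) - (if j = i then v k * of_int (C k i) else 0))"
    unfolding mat_map_def refl_mat_def mat_one_def by (intro sum.cong) (auto simp: algebra_simps)
  then show "simple_refl C i v j = mat_map (refl_mat C i) v j"
    by (simp add: simple_refl_def sum_subtractf)
qed

lemma id_rows_outside_mat_one: "id_rows_outside S mat_one"
  by (simp add: id_rows_outside_def)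

lemma id_rows_outside_mat_mult:
  assumes "id_rows_outside S M" "id_rows_outside S N"
  shows "id_rows_outside S (mat_mult M N)"
  using assms by (simp add: id_rows_outside_def mat_mult_def mat_one_def fun_eq_iff
      if_distrib[of "\<lambda>x. x * _"] cong: if_cong)

lemma id_rows_outside_refl_mat: "i \<in> S \<Longrightarrow> id_rows_outside S (refl_mat C i)"
  by (auto simp: id_rows_outside_def refl_mat_def)

lemma weyl_sub_comp:
  "w \<in> weyl_sub C S \<Longrightarrow> w' \<in> weyl_sub C S \<Longrightarrow> w \<circ> w' \<in> weyl_sub C S"
proof (induction w rule: weyl_sub.induct)
  case weyl_id
  then show ?case by simp
next
  case (weyl_step w i)
  then show ?case by (metis weyl_sub.weyl_step comp_assoc)
qed

lemma simple_refl_in_weyl_sub: "i \<in> S \<Longrightarrow> simple_refl C i \<in> weyl_sub C S"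
  by (metis weyl_sub.weyl_step weyl_sub.weyl_id comp_id)

lemma simple_refl_involution:
  assumes "C i i = 2"
  shows "simple_refl C i \<circ> simple_refl C i = id"
proof (rule ext)+
  fix v j
  define a where "a v = (\<Sum>k\<in>UNIV. v k * of_int (C k i))" for v :: "'a \<Rightarrow> real"
  have "a (simple_refl C i v) = (\<Sum>k\<in>UNIV. v k * of_int (C k i) - (if k = i then a v * 2 else 0))"
    unfolding a_def simple_refl_def using assms by (intro sum.cong) (auto simp: algebra_simps)
  then have "a (simple_refl C i v) = - a v"
    by (simp add: sum_subtractf a_def)
  then show "(simple_refl C i \<circ> simple_refl C i) v j = id v j"
    by (simp add: simple_refl_def[of C i "simple_refl C i v"] flip: a_def) (simp add: simple_refl_def a_def)
qed

lemma weyl_sub_inv: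
  assumes "\<forall>i. C i i = 2" "w \<in> weyl_sub C S"
  shows "bij w \<and> inv w \<in> weyl_sub C S"
  using assms(2)
proof (induction w rule: weyl_sub.induct)
  case weyl_id
  then show ?case by (metis bij_id inv_id weyl_sub.weyl_id)
next
  case (weyl_step w i)
  have "simple_refl C i \<circ> simple_refl C i = id"
    using assms(1) by (simp add: simple_refl_involution)
  then have "bij (simple_refl C i)" and "inv (simple_refl C i) = simple_refl C i"
    by (auto simp: o_bij inv_unique_comp)
  with weyl_step show ?case
    by (metis bij_comp o_inv_distrib weyl_sub_comp simple_refl_in_weyl_sub)
qed

lemma weyl_sub_eq_mat_map:
  "w \<in> weyl_sub C S \<Longrightarrow> \<exists>M. w = mat_map M \<and> id_rows_outside S M"
proof (induction w rule: weyl_sub.induct)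
  case weyl_id
  then show ?case using mat_map_mat_one id_rows_outside_mat_one by metis
next
  case (weyl_step w i)
  then show ?case
    by (metis simple_refl_eq_mat_map mat_map_mat_mult id_rows_outside_mat_mult id_rows_outside_refl_mat)
qed

text \<open>\<open>char_act M \<eta> j\<close> is the value at \<open>M e\<^sub>j\<close> of the character \<open>v \<mapsto> \<Prod>\<^sub>k \<eta> k ^ v k\<close>;
  this is a right action of integer matrices.\<close>

definition char_act :: "('i::finite \<Rightarrow> 'i \<Rightarrow> int) \<Rightarrow> ('i \<Rightarrow> real) \<Rightarrow> 'i \<Rightarrow> real" where
  "char_act M \<eta> = (\<lambda>j. \<Prod>k\<in>UNIV. \<eta> k powi M k j)"

definition one_outside :: "'i set \<Rightarrow> ('i \<Rightarrow> real) \<Rightarrow> 'i \<Rightarrow> real" where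
  "one_outside S \<eta> = (\<lambda>j. if j \<in> S then \<eta> j else 1)"

definition pair_act :: "'i set \<Rightarrow> ('i::finite \<Rightarrow> 'i \<Rightarrow> int) \<Rightarrow> ('i \<Rightarrow> real) \<times> real \<Rightarrow> ('i \<Rightarrow> real) \<times> real" where
  "pair_act S M = (\<lambda>(\<eta>, \<epsilon>). (one_outside S (char_act M \<eta>), (\<Prod>l\<in>-S. char_act M \<eta> l) * \<epsilon>))"

lemma colored_nonzero: "\<eta> \<in> colored S \<Longrightarrow> \<eta> k \<noteq> 0"
  unfolding colored_def by (cases "k \<in> S") auto

lemma colored_abs: "\<eta> \<in> colored S \<Longrightarrow> \<bar>\<eta> k\<bar> = 1"
  unfolding colored_def by (cases "k \<in> S") auto

lemma colored_outside: "\<eta> \<in> colored S \<Longrightarrow> k \<notin> S \<Longrightarrow> \<eta> k = 1"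
  unfolding colored_def by blast

lemma one_outside_colored: "\<eta> \<in> colored S \<Longrightarrow> one_outside S \<eta> = \<eta>"
  by (auto simp: one_outside_def fun_eq_iff colored_outside)

lemma abs_char_act: "(\<And>k. \<bar>\<eta> k\<bar> = 1) \<Longrightarrow> \<bar>char_act M \<eta> j\<bar> = 1"
  by (simp add: char_act_def abs_prod power_int_abs)

lemma char_act_mat_one: "char_act mat_one \<eta> = \<eta>"
  by (simp add: char_act_def mat_one_def fun_eq_iff if_distrib[of "power_int _"] cong: if_cong)

lemma char_act_mat_mult:
  assumes "\<And>k. \<eta> k \<noteq> 0"
  shows "char_act (mat_mult P Q) \<eta> = char_act Q (char_act P \<eta>)"
proof (rule ext)
  fix j
  have "char_act (mat_mult P Q) \<eta> j = (\<Prod>l\<in>UNIV. \<Prod>k\<in>UNIV. (\<eta> l powi P l k) powi Q k j)"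
    by (simp add: char_act_def mat_mult_def power_int_sum assms power_int_mult)
  also have "\<dots> = (\<Prod>k\<in>UNIV. \<Prod>l\<in>UNIV. (\<eta> l powi P l k) powi Q k j)"
    by (rule prod.swap)
  also have "\<dots> = char_act Q (char_act P \<eta>) j"
    by (simp add: char_act_def prod_power_int)
  finally show "char_act (mat_mult P Q) \<eta> j = char_act Q (char_act P \<eta>) j" .
qed

lemma char_act_one_outside:
  assumes "id_rows_outside S Q"
  shows "char_act Q \<chi> l = char_act Q (one_outside S \<chi>) l * (if l \<in> S then 1 else \<chi> l)"
proof -
  have "\<chi> k powi Q k l = one_outside S \<chi> k powi Q k l * (if k = l then (if l \<in> S then 1 else \<chi> l) else 1)" for k
    using assms by (cases "k \<in> S") (auto simp: id_rows_outside_def one_outside_def mat_one_def)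
  then show ?thesis
    by (simp add: char_act_def prod.distrib)
qed

lemma char_act_refl_mat:
  assumes "\<And>k. \<eta> k \<noteq> 0"
  shows "char_act (refl_mat C i) \<eta> j = \<eta> j * \<eta> i powi (- C j i)"
proof -
  have "\<eta> k powi refl_mat C i k j = (if k = j then \<eta> j else 1) * (if k = i then \<eta> i powi (- C j i) else 1)" for k
    using assms by (auto simp: refl_mat_def mat_one_def power_int_diff power_int_minus divide_inverse)
  then show ?thesis
    by (simp add: char_act_def prod.distrib)
qed

lemma pair_act_mat_one: "\<eta> \<in> colored S \<Longrightarrow> pair_act S mat_one (\<eta>, \<epsilon>) = (\<eta>, \<epsilon>)"
  by (simp add: pair_act_def char_act_mat_one one_outside_colored colored_outside)

lemma pair_act_mat_mult:
  assumes "\<And>k. \<eta> k \<noteq> 0" "id_rows_outside S Q"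
  shows "pair_act S (mat_mult P Q) (\<eta>, \<epsilon>) = pair_act S Q (pair_act S P (\<eta>, \<epsilon>))"
proof -
  let ?\<chi> = "char_act P \<eta>"
  have "one_outside S (char_act Q ?\<chi>) = one_outside S (char_act Q (one_outside S ?\<chi>))"
    by (auto simp: one_outside_def fun_eq_iff char_act_one_outside[OF assms(2), of ?\<chi>])
  moreover have "(\<Prod>l\<in>-S. char_act Q ?\<chi> l) = (\<Prod>l\<in>-S. char_act Q (one_outside S ?\<chi>) l) * (\<Prod>l\<in>-S. ?\<chi> l)"
    by (simp add: char_act_one_outside[OF assms(2), of ?\<chi>] prod.distrib)
  ultimately show ?thesis
    by (simp add: pair_act_def char_act_mat_mult[OF assms(1)] mult.assoc)
qed

lemma pair_act_closed:
  assumes "\<eta> \<in> colored S" "\<epsilon> \<in> {1, -1}"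
  shows "pair_act S M (\<eta>, \<epsilon>) \<in> colored S \<times> {1, -1}"
proof -
  have sign_of_abs: "x = 1 \<or> x = -1" if "\<bar>x\<bar> = 1" for x :: real
    using that by linarith
  have abs_char: "\<bar>char_act M \<eta> j\<bar> = 1" for j
    by (rule abs_char_act) (rule colored_abs[OF assms(1)])
  then have "\<bar>(\<Prod>l\<in>-S. char_act M \<eta> l) * \<epsilon>\<bar> = 1"
    using assms(2) by (auto simp: abs_mult abs_prod)
  then show ?thesis
    using sign_of_abs[OF abs_char] sign_of_abs
    by (auto simp: pair_act_def colored_def one_outside_def)
qed

lemma pair_act_refl_mat:
  assumes "i \<in> S" "\<eta> \<in> colored S"
  shows "pair_act S (refl_mat C i) (\<eta>, \<epsilon>) = gen_act C S i (\<eta>, \<epsilon>)"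
proof -
  note char_refl = char_act_refl_mat[OF colored_nonzero[OF assms(2)]]
  have sign: "\<eta> i = 1 \<or> \<eta> i = -1"
    using assms unfolding colored_def by blast
  have "(\<Prod>l\<in>-S. char_act (refl_mat C i) \<eta> l) = (\<Prod>l\<in>-S. if odd (C l i) then \<eta> i else 1)"
    by (intro prod.cong) (auto simp: char_refl colored_outside[OF assms(2)] sign_power_int[OF sign])
  also have "\<dots> = \<eta> i ^ r_num C S i"
    by (simp add: r_num_def flip: prod.inter_filter)
  finally show ?thesis
    by (simp add: pair_act_def gen_act_def refl_col_def one_outside_def char_refl fun_eq_iff)
qed

text \<open>The inverse turns the right action \<open>char_act\<close> into a left action.\<close>

definition weyl_act :: "'i set \<Rightarrow> (('i::finite \<Rightarrow> real) \<Rightarrow> 'i \<Rightarrow> real) \<Rightarrow> ('i \<Rightarrow> real) \<times> real \<Rightarrow> ('i \<Rightarrow> real) \<times> real" where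
  "weyl_act S w = pair_act S (matrix_of (inv w))"

lemma weyl_act_id: "\<eta> \<in> colored S \<Longrightarrow> weyl_act S id (\<eta>, \<epsilon>) = (\<eta>, \<epsilon>)"
  by (metis weyl_act_def inv_id mat_map_mat_one matrix_of_mat_map pair_act_mat_one)

lemma weyl_act_comp:
  assumes "\<forall>i. C i i = 2" "w \<in> weyl_sub C S" "w' \<in> weyl_sub C S" "\<And>k. \<eta> k \<noteq> 0"
  shows "weyl_act S (w \<circ> w') (\<eta>, \<epsilon>) = weyl_act S w (weyl_act S w' (\<eta>, \<epsilon>))"
proof -
  obtain Q where "inv w = mat_map Q" "id_rows_outside S Q" and "bij w"
    using weyl_sub_inv[OF assms(1,2)] weyl_sub_eq_mat_map by metis
  moreover obtain P where "inv w' = mat_map P" and "bij w'"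
    using weyl_sub_inv[OF assms(1,3)] weyl_sub_eq_mat_map by metis
  ultimately have "inv (w \<circ> w') = mat_map (mat_mult P Q)"
    by (simp add: o_inv_distrib mat_map_mat_mult)
  with \<open>inv w = mat_map Q\<close> \<open>inv w' = mat_map P\<close> \<open>id_rows_outside S Q\<close> show ?thesis
    by (simp add: weyl_act_def matrix_of_mat_map pair_act_mat_mult assms(4))
qed

lemma weyl_act_simple_refl:
  assumes "C i i = 2" "i \<in> S" "\<eta> \<in> colored S"
  shows "weyl_act S (simple_refl C i) (\<eta>, \<epsilon>) = gen_act C S i (\<eta>, \<epsilon>)"
proof -
  have "inv (simple_refl C i) = simple_refl C i"
    using simple_refl_involution[of C i, OF assms(1)] by (simp add: inv_unique_comp)
  then show ?thesis
    by (simp add: weyl_act_def simple_refl_eq_mat_map matrix_of_mat_map pair_act_refl_mat assms(2,3))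
qed

theorem proposition4p1p2:
  fixes C :: "'i::finite \<Rightarrow> 'i \<Rightarrow> int" and S :: "'i set"
  assumes "finite_type_cartan C"
  shows "\<exists>act :: (('i \<Rightarrow> real) \<Rightarrow> ('i \<Rightarrow> real)) \<Rightarrow> ('i \<Rightarrow> real) \<times> real \<Rightarrow> ('i \<Rightarrow> real) \<times> real.
           (\<forall>w\<in>weyl_sub C S. \<forall>x\<in>colored S \<times> {1, -1}. act w x \<in> colored S \<times> {1, -1}) \<and>
           (\<forall>x\<in>colored S \<times> {1, -1}. act id x = x) \<and>
           (\<forall>w\<in>weyl_sub C S. \<forall>w'\<in>weyl_sub C S. \<forall>x\<in>colored S \<times> {1, -1}.
               act (w \<circ> w') x = act w (act w' x)) \<and>
           (\<forall>i\<in>S. \<forall>x\<in>colored S \<times> {1, -1}. act (simple_refl C i) x = gen_act C S i x)"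
proof -
  have C_diag: "\<forall>i. C i i = 2"
    using assms by (simp add: finite_type_cartan_def)
  show ?thesis
  proof (intro exI[of _ "weyl_act S"] conjI ballI; clarify)
    show "weyl_act S w (\<eta>, \<epsilon>) \<in> colored S \<times> {1, -1}" if "\<eta> \<in> colored S" "\<epsilon> \<in> {1, -1}" for w \<eta> \<epsilon>
      using that by (simp add: weyl_act_def pair_act_closed)
    show "weyl_act S id (\<eta>, \<epsilon>) = (\<eta>, \<epsilon>)" if "\<eta> \<in> colored S" for \<eta> \<epsilon>
      using that by (rule weyl_act_id)
    show "weyl_act S (w \<circ> w') (\<eta>, \<epsilon>) = weyl_act S w (weyl_act S w' (\<eta>, \<epsilon>))"
      if "w \<in> weyl_sub C S" "w' \<in> weyl_sub C S" "\<eta> \<in> colored S" for w w' \<eta> \<epsilon>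
      using that by (simp add: weyl_act_comp[of C, OF C_diag] colored_nonzero)
    show "weyl_act S (simple_refl C i) (\<eta>, \<epsilon>) = gen_act C S i (\<eta>, \<epsilon>)"
      if "i \<in> S" "\<eta> \<in> colored S" for i \<eta> \<epsilon>
      using that C_diag by (simp add: weyl_act_simple_refl)
  qed
qed

end
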